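(* Let $p\neq 2$ be a prime and $G=Z_{p^{\lambda_1}}\times\cdots\times Z_{p^{\lambda_n}}$ with $0<\lambda_1<\cdots<\lambda_n$. The join-irreducible elements of $\mathrm{Char}(G)$ are precisely the subgroups $J(i,j)$ for $i\in\{1,\dots,n\}$, $j\in\{1,\dots,\lambda_i\}$.
   Context: $\mathrm{Char}(G)$ is the lattice of characteristic subgroups of $G$; an element of a finite lattice is join-irreducible if it is not the bottom element and is not the join of two elements each strictly below it. Tuples are ordered componentwise; for $\mathbf 0\le\mathbf a\le(\lambda_1,\dots,\lambda_n)$, $T(\mathbf a)$ is the set of $(g_1,\dots,g_n)\in G$ with $|g_i|=p^{a_i}$, and $R(\mathbf a)=\bigcup_{\mathbf b\le\mathbf a}T(\mathbf b)$. For $i\in\{1,\dots,n\}$ and $j\in\{1,\dots,\lambda_i\}$, $J(i,j)=R(\mathbf a)$ where $a_k=j$ for $k\ge i$ and $a_k=\max\{0,\,j-(\lambda_i-\lambda_k)\}$ for $k<i$. *)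

theory Defs
  imports "HOL-Algebra.Algebra"
begin

text \<open>The group Z_{p^lam 1} x ... x Z_{p^lam n}, written additively on tuples
  g = (g 1, ..., g n) with 0 <= g i < p^(lam i); coordinates outside 1..n are 0.\<close>
definition cycprod :: "nat \<Rightarrow> nat \<Rightarrow> (nat \<Rightarrow> nat) \<Rightarrow> (nat \<Rightarrow> int) monoid" where
  "cycprod p n lam =
     \<lparr> carrier = {g. (\<forall>i\<in>{1..n}. 0 \<le> g i \<and> g i < int p ^ lam i) \<and> (\<forall>i. i \<notin> {1..n} \<longrightarrow> g i = 0)},
       monoid.mult = (\<lambda>g h i. if i \<in> {1..n} then (g i + h i) mod (int p ^ lam i) else 0),
       one = (\<lambda>i. 0) \<rparr>"

definition cyc_ord :: "int \<Rightarrow> int \<Rightarrow> nat" where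
  "cyc_ord m x = (LEAST k::nat. 0 < k \<and> m dvd (int k * x))"

definition Char :: "('a, 'b) monoid_scheme \<Rightarrow> 'a set set" where
  "Char G = {H. subgroup H G \<and> (\<forall>\<phi>\<in>iso G G. \<phi> ` H = H)}"

text \<open>Join-irreducible elements of the lattice Char(G) (ordered by inclusion):
  not the bottom element, and not the join (least upper bound in Char(G))
  of two elements strictly below it.\<close>
definition is_join_Char :: "('a, 'b) monoid_scheme \<Rightarrow> 'a set \<Rightarrow> 'a set \<Rightarrow> 'a set \<Rightarrow> bool" where
  "is_join_Char G A B J \<longleftrightarrow> J \<in> Char G \<and> A \<subseteq> J \<and> B \<subseteq> J \<and>
     (\<forall>K\<in>Char G. A \<subseteq> K \<and> B \<subseteq> K \<longrightarrow> J \<subseteq> K)"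

definition join_irreducible_Char :: "('a, 'b) monoid_scheme \<Rightarrow> 'a set \<Rightarrow> bool" where
  "join_irreducible_Char G J \<longleftrightarrow> J \<in> Char G \<and>
     \<not> (\<forall>K\<in>Char G. J \<subseteq> K) \<and>
     \<not> (\<exists>A\<in>Char G. \<exists>B\<in>Char G. A \<subset> J \<and> B \<subset> J \<and> is_join_Char G A B J)"

definition Tset :: "nat \<Rightarrow> nat \<Rightarrow> (nat \<Rightarrow> nat) \<Rightarrow> (nat \<Rightarrow> nat) \<Rightarrow> (nat \<Rightarrow> int) set" where
  "Tset p n lam a = {g \<in> carrier (cycprod p n lam).
      \<forall>i\<in>{1..n}. cyc_ord (int p ^ lam i) (g i) = p ^ a i}"

definition Rset :: "nat \<Rightarrow> nat \<Rightarrow> (nat \<Rightarrow> nat) \<Rightarrow> (nat \<Rightarrow> nat) \<Rightarrow> (nat \<Rightarrow> int) set" where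
  "Rset p n lam a = (\<Union>b\<in>{b. \<forall>i\<in>{1..n}. b i \<le> a i}. Tset p n lam b)"

definition Jset :: "nat \<Rightarrow> nat \<Rightarrow> (nat \<Rightarrow> nat) \<Rightarrow> nat \<Rightarrow> nat \<Rightarrow> (nat \<Rightarrow> int) set" where
  "Jset p n lam i j = Rset p n lam
     (\<lambda>k. if k \<ge> i then j else nat (max 0 (int j - (int (lam i) - int (lam k)))))"

end

theory Submission
  imports Defs "HOL-Number_Theory.Cong"
begin

text \<open>
  Because p is odd, a characteristic subgroup K contains, together with g, every coordinate
  projection g_i e_i: the automorphism negating all coordinates but the i-th sends g to an
  element whose sum with g is 2 g_i e_i, and 2 is invertible modulo p^\<lambda>_i. The shears
  g \<mapsto> g + c g_i e_k, automorphisms whenever p^\<lambda>_k divides c p^\<lambda>_i, carry p^(\<lambda>_i - j) e_i to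
  the generators p^f e_k of J(i,j); so K contains J(i,j) as soon as some g in K has a coordinate
  g_i of order at least p^j. Each J(i,j) = {g. p^j g = 0} \<inter> p^(\<lambda>_i - j) G is characteristic, hence
  every characteristic subgroup is the join of the J(i,j) it contains, and a join-irreducible
  one is among them. Conversely, if p^(\<lambda>_i - j) e_i = a + b then a_i or b_i has order p^j, so every
  characteristic subgroup containing a or b contains J(i,j): J(i,j) is join-irreducible.
\<close>

lemma power_dvd_max_iff:
  fixes b x :: "'a::comm_semiring_1"
  shows "b ^ k dvd x \<and> b ^ l dvd x \<longleftrightarrow> b ^ max k l dvd x"
  using le_imp_power_dvd[of k l b] le_imp_power_dvd[of l k b] by (auto simp: max_def intro: dvd_trans)

lemma power_dvd_power_mult_iff:
  fixes b x :: int
  assumes "b \<noteq> 0"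
  shows "b ^ l dvd b ^ k * x \<longleftrightarrow> b ^ (l - k) dvd x"
proof (cases "k \<le> l")
  case True
  then have "b ^ l = b ^ k * b ^ (l - k)" by (simp add: power_add[symmetric])
  then show ?thesis using assms by simp
next
  case False
  then show ?thesis by (simp add: le_imp_power_dvd dvd_mult2)
qed

lemma cyc_ord_dvd_iff:
  assumes m: "0 < m"
  shows "int (cyc_ord m x) dvd int k \<longleftrightarrow> m dvd int k * x"
proof -
  let ?P = "\<lambda>k::nat. 0 < k \<and> m dvd int k * x"
  let ?o = "cyc_ord m x"
  have P: "?P ?o" unfolding cyc_ord_def by (rule LeastI[of ?P "nat m"]) (use m in simp)
  have least: "?P k \<Longrightarrow> ?o \<le> k" for k unfolding cyc_ord_def by (rule Least_le)
  show ?thesis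
  proof
    assume "int ?o dvd int k"
    then show "m dvd int k * x" using P by (metis dvd_mult_left dvd_trans mult_dvd_mono dvd_refl)
  next
    assume k: "m dvd int k * x"
    have "int k * x = int (k div ?o) * (int ?o * x) + int (k mod ?o) * x"
      by (metis (no_types, opaque_lifting) div_mult_mod_eq distrib_right mult.assoc of_nat_add of_nat_mult)
    then have "m dvd int (k mod ?o) * x" using k P by (metis dvd_add_right_iff dvd_mult)
    moreover have "k mod ?o < ?o" using P by simp
    ultimately have "k mod ?o = 0" using least by (meson leD not_gr0)
    then show "int ?o dvd int k" by auto
  qed
qed

lemma prime_power_exact_dvd:
  fixes p :: nat and v :: int
  assumes "Factorial_Ring.prime p" and "0 < v" and "v < int p ^ L"
  obtains s where "s < L" "int p ^ s dvd v" "\<not> int p ^ Suc s dvd v"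
proof -
  let ?s = "multiplicity (int p) v"
  have nu: "\<not> is_unit (int p)" using prime_gt_1_nat[OF assms(1)] by simp
  have "\<not> int p ^ L dvd v" using assms(2,3) by (auto dest: zdvd_imp_le)
  then have "?s < L" using multiplicity_lessI[OF _ nu] assms(2) by simp
  moreover have "\<not> int p ^ Suc ?s dvd v"
    using multiplicity_geI[OF _ nu, of v "Suc ?s"] assms(2) by auto
  ultimately show ?thesis using that multiplicity_dvd by blast
qed

lemma exists_cong_mult_prime_power:
  fixes p :: nat and v :: int
  assumes p: "Factorial_Ring.prime p" and v: "\<not> int p ^ Suc e dvd v"
  obtains c where "[c * v = int p ^ e] (mod int p ^ L)"
proof -
  have pi: "Factorial_Ring.prime (int p)" using p by simp
  have v0: "v \<noteq> 0" using v by auto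
  have nu: "\<not> is_unit (int p)" using prime_gt_1_nat[OF p] by simp
  define s where "s = multiplicity (int p) v"
  obtain u where vu: "v = int p ^ s * u" and pu: "\<not> int p dvd u"
    unfolding s_def using multiplicity_decompose'[OF v0 nu] by blast
  have "s \<le> e" using multiplicity_lessI[OF v0 nu v] unfolding s_def by simp
  then have pe: "int p ^ e = int p ^ s * int p ^ (e - s)" by (simp flip: power_add)
  have "coprime u (int p ^ L)" using prime_imp_coprime[OF pi pu] by (simp add: coprime_commute)
  then obtain u' where u': "[u * u' = 1] (mod int p ^ L)" using cong_solve_coprime_int by blast
  have "(u' * int p ^ (e - s)) * v = (u * u') * int p ^ e" unfolding pe vu by (simp add: ac_simps)
  then have "[(u' * int p ^ (e - s)) * v = (u * u') * int p ^ e] (mod int p ^ L)"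
    by (simp only: cong_refl)
  also have "[(u * u') * int p ^ e = 1 * int p ^ e] (mod int p ^ L)"
    by (rule cong_scalar_right[OF u'])
  finally show ?thesis using that by simp
qed

lemma mult_mod_eq_if_dvd:
  fixes c x Q R :: int
  assumes "R dvd c * Q"
  shows "(c * (x mod Q)) mod R = (c * x) mod R"
proof -
  have "c * x - c * (x mod Q) = c * Q * (x div Q)"
    using minus_mod_eq_mult_div[of x Q] by (metis right_diff_distrib mult.assoc)
  then have "R dvd c * x - c * (x mod Q)" using assms by simp
  then show ?thesis by (simp add: mod_eq_dvd_iff dvd_diff_commute)
qed

section \<open>Characteristic subgroups\<close>

lemma Char_subgroup: "K \<in> Char G \<Longrightarrow> subgroup K G"
  by (simp add: Char_def)

lemma Char_iso_closed: "K \<in> Char G \<Longrightarrow> \<phi> \<in> iso G G \<Longrightarrow> x \<in> K \<Longrightarrow> \<phi> x \<in> K"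
  by (auto simp: Char_def)

lemma (in group) CharI:
  assumes H: "subgroup H G" and closed: "\<And>\<phi>. \<phi> \<in> iso G G \<Longrightarrow> \<phi> ` H \<subseteq> H"
  shows "H \<in> Char G"
proof -
  have "H \<subseteq> \<phi> ` H" if \<phi>: "\<phi> \<in> iso G G" for \<phi>
  proof
    fix y assume y: "y \<in> H"
    have "\<phi> ` carrier G = carrier G" using \<phi> by (simp add: iso_iff)
    then have "y = \<phi> (inv_into (carrier G) \<phi> y)"
      using y subgroup.subset[OF H] by (simp add: f_inv_into_f subset_iff)
    moreover have "inv_into (carrier G) \<phi> y \<in> H"
      using closed[OF iso_set_sym[OF \<phi>]] y by blast
    ultimately show "y \<in> \<phi> ` H" by blast
  qed
  with H closed show ?thesis unfolding Char_def by blast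
qed

lemma (in group) trivial_Char: "{\<one>} \<in> Char G"
  by (rule CharI[OF triv_subgroup]) (auto simp: iso_iff hom_one is_group)

lemma (in group) carrier_Char: "carrier G \<in> Char G"
  by (rule CharI[OF subgroup_self]) (auto simp: iso_iff)

lemma (in group) Inter_Char:
  assumes "\<K> \<noteq> {}" and "\<K> \<subseteq> Char G"
  shows "\<Inter>\<K> \<in> Char G"
proof (rule CharI)
  show "subgroup (\<Inter>\<K>) G"
    using assms by (intro subgroups_Inter) (auto simp: Char_def)
  show "\<phi> ` \<Inter>\<K> \<subseteq> \<Inter>\<K>" if "\<phi> \<in> iso G G" for \<phi>
    using assms(2) that unfolding Char_def by blast
qed

lemma (in group) Int_Char: "A \<in> Char G \<Longrightarrow> B \<in> Char G \<Longrightarrow> A \<inter> B \<in> Char G"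
  using Inter_Char[of "{A, B}"] by simp

lemma (in comm_group) set_mult_Char:
  assumes A: "A \<in> Char G" and B: "B \<in> Char G"
  shows "A <#> B \<in> Char G"
proof (rule CharI)
  have sA: "subgroup A G" and sB: "subgroup B G" using A B by (simp_all add: Char_subgroup)
  then show "subgroup (A <#> B) G" by (rule mult_subgroups)
  show "\<phi> ` (A <#> B) \<subseteq> A <#> B" if \<phi>: "\<phi> \<in> iso G G" for \<phi>
    using set_mult_hom[OF iso_imp_homomorphism[OF \<phi>] subgroup.subset[OF sA] subgroup.subset[OF sB]]
      A B \<phi> by (simp add: Char_def)
qed

lemma (in monoid) subgroup_nat_pow_closed: "subgroup H G \<Longrightarrow> x \<in> H \<Longrightarrow> x [^] (k::nat) \<in> H"
  by (induction k) (simp_all add: subgroup.one_closed subgroup.m_closed)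

lemma (in group) subgroup_subset_set_mult:
  assumes "subgroup A G" and "subgroup B G"
  shows "A \<subseteq> A <#> B" and "B \<subseteq> A <#> B"
  using assms by (force simp: set_mult_def dest: subgroup.one_closed subgroup.mem_carrier)+

definition pow_kernel :: "('a, 'b) monoid_scheme \<Rightarrow> nat \<Rightarrow> 'a set" where
  "pow_kernel G m = {g \<in> carrier G. g [^]\<^bsub>G\<^esub> m = \<one>\<^bsub>G\<^esub>}"

definition pow_image :: "('a, 'b) monoid_scheme \<Rightarrow> nat \<Rightarrow> 'a set" where
  "pow_image G m = (\<lambda>g. g [^]\<^bsub>G\<^esub> m) ` carrier G"

lemma (in comm_group) pow_kernel_Char: "pow_kernel G m \<in> Char G"
proof (rule CharI)
  show "subgroup (pow_kernel G m) G"
    by (rule subgroupI) (auto simp: pow_kernel_def nat_pow_inv pow_mult_distrib[OF m_comm])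
  show "\<phi> ` pow_kernel G m \<subseteq> pow_kernel G m" if "\<phi> \<in> iso G G" for \<phi>
    using iso_imp_homomorphism[OF that]
    by (auto simp: pow_kernel_def hom_nat_pow[symmetric] hom_one is_group dest: hom_in_carrier)
qed

lemma (in comm_group) pow_image_Char: "pow_image G m \<in> Char G"
proof (rule CharI)
  show "subgroup (pow_image G m) G"
  proof (rule subgroupI)
    fix a b assume "a \<in> pow_image G m" "b \<in> pow_image G m"
    then show "a \<otimes> b \<in> pow_image G m"
      by (auto simp: pow_image_def pow_mult_distrib[OF m_comm, symmetric])
  qed (auto simp: pow_image_def nat_pow_inv[symmetric])
  show "\<phi> ` pow_image G m \<subseteq> pow_image G m" if "\<phi> \<in> iso G G" for \<phi>
    using iso_imp_homomorphism[OF that]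
    by (auto simp: pow_image_def hom_nat_pow is_group dest: hom_in_carrier)
qed

lemma iso_selfI:
  assumes f: "f \<in> carrier G \<rightarrow> carrier G" and f': "f' \<in> carrier G \<rightarrow> carrier G"
    and "\<And>g. g \<in> carrier G \<Longrightarrow> f' (f g) = g" and "\<And>g. g \<in> carrier G \<Longrightarrow> f (f' g) = g"
    and "\<And>g h. g \<in> carrier G \<Longrightarrow> h \<in> carrier G \<Longrightarrow> f (g \<otimes>\<^bsub>G\<^esub> h) = f g \<otimes>\<^bsub>G\<^esub> f h"
  shows "f \<in> iso G G"
proof (rule isoI)
  show "f \<in> hom G G" using f assms(5) by (simp add: hom_def)
  show "bij_betw f (carrier G) (carrier G)"
    using f f' assms(3,4) by (intro bij_betw_byWitness[where f' = f']) auto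
qed

lemma (in group) join_irreducible_Char_mem_family:
  assumes H: "join_irreducible_Char G H"
  shows "\<lbrakk>finite F; F \<subseteq> Char G; \<forall>A\<in>F. A \<subseteq> H;
          \<forall>K\<in>Char G. (\<forall>A\<in>F. A \<subseteq> K) \<longrightarrow> H \<subseteq> K\<rbrakk> \<Longrightarrow> H \<in> F"
proof (induction F rule: finite_induct)
  case empty
  then show ?case using H by (simp add: join_irreducible_Char_def)
next
  case (insert A F)
  define B where "B = \<Inter>{K \<in> Char G. \<forall>A'\<in>F. A' \<subseteq> K}"
  have HC: "H \<in> Char G" using H by (simp add: join_irreducible_Char_def)
  have AC: "A \<in> Char G" and AH: "A \<subseteq> H" using insert.prems(1,2) by auto
  have "carrier G \<in> {K \<in> Char G. \<forall>A'\<in>F. A' \<subseteq> K}"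
    using carrier_Char insert.prems(1) by (auto dest: Char_subgroup subgroup.subset)
  then have BC: "B \<in> Char G" unfolding B_def by (intro Inter_Char) auto
  have BH: "B \<subseteq> H" using HC insert.prems(2) unfolding B_def by (intro Inter_lower) auto
  have "is_join_Char G A B H"
    unfolding is_join_Char_def
  proof (intro conjI HC AH BH ballI impI)
    fix K assume "K \<in> Char G" "A \<subseteq> K \<and> B \<subseteq> K"
    moreover have "\<forall>A'\<in>F. A' \<subseteq> B" unfolding B_def by blast
    ultimately show "H \<subseteq> K" using insert.prems(3) by blast
  qed
  then have "\<not> (A \<subset> H \<and> B \<subset> H)"
    using H AC BC unfolding join_irreducible_Char_def by blast
  then have "A = H \<or> B = H" using AH BH by blast
  moreover have "H \<in> F" if "B = H"
  proof (rule insert.IH)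
    show "\<forall>K\<in>Char G. (\<forall>A\<in>F. A \<subseteq> K) \<longrightarrow> H \<subseteq> K"
      using that unfolding B_def by blast
  qed (use insert.prems(1,2) in auto)
  ultimately show ?case by blast
qed

lemma (in comm_group) join_irreducible_CharI:
  assumes J: "J \<in> Char G" and x: "x \<in> J" "x \<noteq> \<one>"
    and split: "\<And>a b. a \<in> carrier G \<Longrightarrow> b \<in> carrier G \<Longrightarrow> x = a \<otimes> b \<Longrightarrow>
                 (\<forall>K\<in>Char G. a \<in> K \<longrightarrow> J \<subseteq> K) \<or> (\<forall>K\<in>Char G. b \<in> K \<longrightarrow> J \<subseteq> K)"
  shows "join_irreducible_Char G J"
proof -
  have "\<not> is_join_Char G A B J" if A: "A \<in> Char G" "A \<subset> J" and B: "B \<in> Char G" "B \<subset> J" for A B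
  proof
    assume "is_join_Char G A B J"
    moreover have "A \<subseteq> A <#> B" "B \<subseteq> A <#> B"
      using subgroup_subset_set_mult A B by (simp_all add: Char_subgroup)
    ultimately have "x \<in> A <#> B"
      using set_mult_Char[OF A(1) B(1)] x unfolding is_join_Char_def by blast
    then obtain a b where "a \<in> A" "b \<in> B" "x = a \<otimes> b" unfolding set_mult_def by blast
    moreover have "a \<in> carrier G" "b \<in> carrier G"
      using \<open>a \<in> A\<close> \<open>b \<in> B\<close> A(1) B(1) by (auto dest: Char_subgroup subgroup.mem_carrier)
    ultimately have "J \<subseteq> A \<or> J \<subseteq> B" using split A(1) B(1) by blast
    with A(2) B(2) show False by blast
  qed
  moreover have "\<not> J \<subseteq> {\<one>}" using x by blast
  ultimately show ?thesis
    using J trivial_Char unfolding join_irreducible_Char_def by blast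
qed

section \<open>The group Z_{p^lam 1} x ... x Z_{p^lam n}\<close>

locale cyclic_product =
  fixes p n :: nat and lam :: "nat \<Rightarrow> nat" and G (structure)
  defines G_def: "G \<equiv> cycprod p n lam"
  assumes prime_p: "Factorial_Ring.prime p"
begin

abbreviation q where "q i \<equiv> int p ^ lam i"

lemma p_gt_1: "1 < p"
  using prime_p by (rule prime_gt_1_nat)

lemma q_pos: "0 < q i"
  using p_gt_1 by simp

lemma pow_less_q: "e < lam i \<Longrightarrow> int p ^ e < q i"
  using p_gt_1 by (simp add: power_strict_increasing)

lemma eq_0_if_q_dvd: "0 \<le> x \<Longrightarrow> x < q i \<Longrightarrow> q i dvd x \<Longrightarrow> x = 0"
  by (metis zdvd_not_zless le_less)

lemma cycprod_carrier:
  "g \<in> carrier G \<longleftrightarrow> (\<forall>i\<in>{1..n}. 0 \<le> g i \<and> g i < q i) \<and> (\<forall>i. i \<notin> {1..n} \<longrightarrow> g i = 0)"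
  by (simp add: G_def cycprod_def)

lemma cycprod_mult: "g \<otimes>\<^bsub>G\<^esub> h = (\<lambda>i. if i \<in> {1..n} then (g i + h i) mod q i else 0)"
  by (simp add: G_def cycprod_def)

lemma cycprod_one: "\<one>\<^bsub>G\<^esub> = (\<lambda>i. 0)"
  by (simp add: G_def cycprod_def)

lemma comm_group_cycprod: "comm_group G"
proof (rule comm_groupI)
  fix x y z assume x: "x \<in> carrier G" and "y \<in> carrier G" and "z \<in> carrier G"
  show "x \<otimes> y \<in> carrier G" using q_pos by (auto simp: cycprod_carrier cycprod_mult)
  show "x \<otimes> y \<otimes> z = x \<otimes> (y \<otimes> z)"
    by (auto simp: cycprod_mult mod_add_left_eq mod_add_right_eq add.assoc)
  show "x \<otimes> y = y \<otimes> x" by (auto simp: cycprod_mult add.commute)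
  show "\<one> \<otimes> x = x" using x by (auto simp: cycprod_mult cycprod_one cycprod_carrier)
  let ?y = "\<lambda>i. if i \<in> {1..n} then (- x i) mod q i else 0"
  have "?y \<in> carrier G \<and> ?y \<otimes> x = \<one>"
    using q_pos by (auto simp: cycprod_carrier cycprod_mult cycprod_one mod_add_left_eq)
  then show "\<exists>y\<in>carrier G. y \<otimes> x = \<one>" by blast
qed (use q_pos in \<open>auto simp: cycprod_carrier cycprod_one\<close>)

sublocale comm_group G
  by (rule comm_group_cycprod)

lemma cycprod_pow: "g [^] (m::nat) = (\<lambda>i. if i \<in> {1..n} then (int m * g i) mod q i else 0)"
  by (induction m) (auto simp: cycprod_one cycprod_mult mod_add_left_eq mod_add_right_eq
                                ring_distribs add.commute)

lemma Rset_iff: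
  "g \<in> Rset p n lam a \<longleftrightarrow> g \<in> carrier G \<and> (\<forall>i\<in>{1..n}. int p ^ (lam i - a i) dvd g i)"
proof -
  have ord: "cyc_ord (q i) (g i) dvd p ^ a i \<longleftrightarrow> int p ^ (lam i - a i) dvd g i" for i
  proof -
    have "int (cyc_ord (q i) (g i)) dvd int (p ^ a i) \<longleftrightarrow> q i dvd int (p ^ a i) * g i"
      by (rule cyc_ord_dvd_iff[OF q_pos])
    then show ?thesis using power_dvd_power_mult_iff[of "int p" "lam i" "a i" "g i"] p_gt_1
      by (simp only: of_nat_dvd_iff) simp
  qed
  have "(\<exists>b. (\<forall>i\<in>{1..n}. b i \<le> a i) \<and> (\<forall>i\<in>{1..n}. cyc_ord (q i) (g i) = p ^ b i))
        \<longleftrightarrow> (\<forall>i\<in>{1..n}. cyc_ord (q i) (g i) dvd p ^ a i)" (is "?L \<longleftrightarrow> ?R")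
  proof
    assume ?L then show ?R by (force intro: le_imp_power_dvd)
  next
    assume ?R
    then have "\<forall>i\<in>{1..n}. \<exists>b\<le>a i. cyc_ord (q i) (g i) = p ^ b"
      by (auto simp: divides_primepow_nat[OF prime_p])
    then show ?L by metis
  qed
  then show ?thesis by (auto simp: Rset_def Tset_def ord G_def)
qed

lemma pow_kernel_iff:
  "g \<in> pow_kernel G (p ^ j) \<longleftrightarrow> g \<in> carrier G \<and> (\<forall>k\<in>{1..n}. int p ^ (lam k - j) dvd g k)"
proof -
  have "g [^] (p ^ j) = \<one> \<longleftrightarrow> (\<forall>k\<in>{1..n}. q k dvd int p ^ j * g k)"
    by (auto simp: cycprod_pow cycprod_one fun_eq_iff)
  then show ?thesis
    using power_dvd_power_mult_iff[of "int p"] p_gt_1 by (auto simp: pow_kernel_def)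
qed

lemma pow_image_iff:
  "g \<in> pow_image G (p ^ t) \<longleftrightarrow> g \<in> carrier G \<and> (\<forall>k\<in>{1..n}. int p ^ min t (lam k) dvd g k)"
proof
  assume "g \<in> pow_image G (p ^ t)"
  then obtain h where h: "h \<in> carrier G" and g: "g = h [^] (p ^ t)" by (auto simp: pow_image_def)
  have "int p ^ min t (lam k) dvd (int p ^ t * h k) mod q k" for k
    by (intro dvd_mod) (simp_all add: le_imp_power_dvd dvd_mult2)
  then show "g \<in> carrier G \<and> (\<forall>k\<in>{1..n}. int p ^ min t (lam k) dvd g k)"
    using h by (simp add: g) (simp add: cycprod_pow)
next
  assume g: "g \<in> carrier G \<and> (\<forall>k\<in>{1..n}. int p ^ min t (lam k) dvd g k)"
  define h where "h k = (if k \<in> {1..n} \<and> t \<le> lam k then g k div int p ^ t else 0)" for k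
  have "0 \<le> g k div int p ^ t \<and> g k div int p ^ t < q k" if "k \<in> {1..n}" for k
  proof -
    have "0 \<le> g k" "g k < q k" using g that by (auto simp: cycprod_carrier)
    moreover have "g k div int p ^ t \<le> g k"
      using zdiv_mono2[of "g k" 1 "int p ^ t"] \<open>0 \<le> g k\<close> p_gt_1 by simp
    ultimately show ?thesis using p_gt_1 by (simp add: pos_imp_zdiv_nonneg_iff)
  qed
  then have "h \<in> carrier G" using q_pos by (auto simp: cycprod_carrier h_def)
  moreover have "g = h [^] (p ^ t)"
  proof
    fix k
    show "g k = (h [^] (p ^ t)) k"
    proof (cases "k \<in> {1..n} \<and> t \<le> lam k")
      case True
      then have "int p ^ t dvd g k" using g by (metis min.orderE)
      then show ?thesis using True g by (simp add: cycprod_pow h_def cycprod_carrier)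
    next
      case False
      then have "g k = 0"
        using g eq_0_if_q_dvd by (metis cycprod_carrier min.absorb2 nat_le_linear)
      then show ?thesis by (simp add: cycprod_pow h_def)
    qed
  qed
  ultimately show "g \<in> pow_image G (p ^ t)" by (auto simp: pow_image_def)
qed

definition single :: "nat \<Rightarrow> int \<Rightarrow> nat \<Rightarrow> int" where
  "single k v = (\<lambda>m. if m = k then v else 0)"

lemma single_0: "single k 0 = \<one>"
  by (simp add: single_def cycprod_one fun_eq_iff)

lemma single_in_carrier: "k \<in> {1..n} \<Longrightarrow> 0 \<le> v \<Longrightarrow> v < q k \<Longrightarrow> single k v \<in> carrier G"
  using q_pos by (auto simp: cycprod_carrier single_def)

lemma single_pow: "k \<in> {1..n} \<Longrightarrow> single k v [^] (N::nat) = single k ((int N * v) mod q k)"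
  by (auto simp: cycprod_pow single_def)

lemma single_mult_mem_Char:
  assumes K: "K \<in> Char G" and k: "k \<in> {1..n}" and v: "single k v \<in> K"
  shows "single k ((c * v) mod q k) \<in> K"
proof -
  have "(int (nat (c mod q k)) * v) mod q k = (c * v) mod q k"
    using q_pos[of k] by (simp add: mod_mult_left_eq)
  then show ?thesis
    using subgroup_nat_pow_closed[OF Char_subgroup[OF K] v, of "nat (c mod q k)"] single_pow[OF k]
    by simp
qed

lemma mem_Char_if_singles:
  assumes K: "K \<in> Char G" and g: "g \<in> carrier G"
    and singles: "\<And>k. k \<in> {1..n} \<Longrightarrow> single k (g k) \<in> K"
  shows "g \<in> K"
proof -
  have "m \<le> n \<Longrightarrow> (\<lambda>k. if k \<le> m then g k else 0) \<in> K" for m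
  proof (induction m)
    case 0
    have "(\<lambda>k. if k \<le> 0 then g k else 0) = \<one>"
      using g by (auto simp: cycprod_one cycprod_carrier)
    then show ?case using subgroup.one_closed[OF Char_subgroup[OF K]] by simp
  next
    case (Suc m)
    have "(\<lambda>k. if k \<le> Suc m then g k else 0) = (\<lambda>k. if k \<le> m then g k else 0) \<otimes> single (Suc m) (g (Suc m))"
      using g Suc.prems by (auto simp: cycprod_mult cycprod_carrier single_def fun_eq_iff)
    then show ?case
      using Suc subgroup.m_closed[OF Char_subgroup[OF K]] singles[of "Suc m"] by simp
  qed
  moreover have "(\<lambda>k. if k \<le> n then g k else 0) = g"
    using g by (auto simp: cycprod_carrier fun_eq_iff)
  ultimately show ?thesis by force
qed

definition negate_except :: "nat \<Rightarrow> (nat \<Rightarrow> int) \<Rightarrow> nat \<Rightarrow> int" where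
  "negate_except i g = (\<lambda>m. if m = i then g m else (- g m) mod q m)"

lemma negate_except_iso: "negate_except i \<in> iso G G"
proof (rule iso_selfI)
  show "negate_except i \<in> carrier G \<rightarrow> carrier G"
    using q_pos by (auto simp: negate_except_def cycprod_carrier)
  then show "negate_except i \<in> carrier G \<rightarrow> carrier G" .
  show "negate_except i (negate_except i g) = g" if "g \<in> carrier G" for g
  proof
    fix m show "negate_except i (negate_except i g) m = g m"
      using that by (cases "m \<in> {1..n}") (auto simp: negate_except_def cycprod_carrier mod_minus_eq)
  qed
  then show "negate_except i (negate_except i g) = g" if "g \<in> carrier G" for g
    using that .
  show "negate_except i (g \<otimes> h) = negate_except i g \<otimes> negate_except i h" for g h
  proof -
    have "(- ((g m + h m) mod q m)) mod q m = ((- g m) mod q m + (- h m) mod q m) mod q m" for m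
      by (metis minus_add_distrib mod_add_eq mod_minus_eq)
    then show ?thesis by (simp add: negate_except_def cycprod_mult fun_eq_iff)
  qed
qed

definition shear :: "nat \<Rightarrow> nat \<Rightarrow> int \<Rightarrow> (nat \<Rightarrow> int) \<Rightarrow> nat \<Rightarrow> int" where
  "shear k i c g = g(k := (g k + c * g i) mod q k)"

lemma shear_iso:
  assumes i: "i \<in> {1..n}" and k: "k \<in> {1..n}" and "k \<noteq> i" and dvd: "q k dvd c * q i"
  shows "shear k i c \<in> iso G G"
proof (rule iso_selfI[where f' = "shear k i (- c)"])
  have closed: "shear k i c' \<in> carrier G \<rightarrow> carrier G" for c'
    using k q_pos by (auto simp: shear_def cycprod_carrier)
  show "shear k i c \<in> carrier G \<rightarrow> carrier G" "shear k i (- c) \<in> carrier G \<rightarrow> carrier G"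
    by (rule closed)+
  have inverse: "shear k i (- c') (shear k i c' g) = g" if "g \<in> carrier G" for g c'
  proof -
    have "0 \<le> g k" "g k < q k" using that k by (auto simp: cycprod_carrier)
    then have "((g k + c' * g i) mod q k + - c' * g i) mod q k = g k"
      by (simp add: mod_diff_left_eq)
    then show ?thesis using \<open>k \<noteq> i\<close> by (simp add: shear_def)
  qed
  show "shear k i (- c) (shear k i c g) = g" if "g \<in> carrier G" for g
    using inverse[OF that] .
  show "shear k i c (shear k i (- c) g) = g" if "g \<in> carrier G" for g
    using inverse[OF that, of "- c"] by simp
  show "shear k i c (g \<otimes> h) = shear k i c g \<otimes> shear k i c h" for g h
  proof -
    have "((g k + h k) mod q k + c * ((g i + h i) mod q i)) mod q k
        = ((g k + h k) + (c * ((g i + h i) mod q i)) mod q k) mod q k"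
      by (simp add: mod_add_left_eq mod_add_right_eq)
    also have "\<dots> = ((g k + h k) + c * (g i + h i)) mod q k"
      by (simp add: mult_mod_eq_if_dvd[OF dvd] mod_add_right_eq)
    also have "\<dots> = ((g k + c * g i) mod q k + (h k + c * h i) mod q k) mod q k"
      by (simp add: mod_add_eq algebra_simps)
    finally show ?thesis using i k \<open>k \<noteq> i\<close> by (auto simp: shear_def cycprod_mult fun_eq_iff)
  qed
qed

lemma single_coord_mem_Char:
  assumes "odd p" and K: "K \<in> Char G" and g: "g \<in> K" and i: "i \<in> {1..n}"
  shows "single i (g i) \<in> K"
proof -
  have gi: "0 \<le> g i" "g i < q i"
    using subgroup.mem_carrier[OF Char_subgroup[OF K] g] i by (auto simp: cycprod_carrier)
  have "g \<otimes> negate_except i g = single i ((2 * g i) mod q i)"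
    using i by (auto simp: cycprod_mult negate_except_def single_def fun_eq_iff mod_add_right_eq)
  moreover have "g \<otimes> negate_except i g \<in> K"
    using subgroup.m_closed[OF Char_subgroup[OF K] g Char_iso_closed[OF K negate_except_iso g]] .
  ultimately have two_g: "single i ((2 * g i) mod q i) \<in> K" by simp
  have "odd (q i)" using \<open>odd p\<close> by simp
  then obtain r where r: "q i = 2 * r + 1" by (rule oddE)
  have "((r + 1) * ((2 * g i) mod q i)) mod q i = ((r + 1) * (2 * g i)) mod q i"
    by (rule mod_mult_right_eq)
  also have "(r + 1) * (2 * g i) = g i + g i * q i" by (simp add: r algebra_simps)
  also have "(g i + g i * q i) mod q i = g i" using gi by simp
  finally show ?thesis using single_mult_mem_Char[OF K i two_g, of "r + 1"] by simp
qed

lemma single_dvd_mem_Char: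
  assumes K: "K \<in> Char G" and k: "k \<in> {1..n}" and d: "single k d \<in> K"
    and "d dvd v" and "0 \<le> v" "v < q k"
  shows "single k v \<in> K"
proof -
  obtain c where "v = c * d" using \<open>d dvd v\<close> by (metis dvd_def mult.commute)
  then show ?thesis using single_mult_mem_Char[OF K k d, of c] assms(5,6) by simp
qed

lemma single_prime_power_mem_Char:
  assumes K: "K \<in> Char G" and i: "i \<in> {1..n}" and v: "single i v \<in> K"
    and "e < lam i" and "\<not> int p ^ Suc e dvd v"
  shows "single i (int p ^ e) \<in> K"
proof -
  obtain c where "[c * v = int p ^ e] (mod q i)"
    using exists_cong_mult_prime_power[OF prime_p \<open>\<not> int p ^ Suc e dvd v\<close>] .
  then have "(c * v) mod q i = int p ^ e"
    using pow_less_q[OF \<open>e < lam i\<close>] by (simp add: cong_def)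
  then show ?thesis using single_mult_mem_Char[OF K i v, of c] by simp
qed

lemma single_shift_mem_Char:
  assumes K: "K \<in> Char G" and x: "single i (int p ^ e) \<in> K"
    and i: "i \<in> {1..n}" and k: "k \<in> {1..n}" and "k \<noteq> i"
    and "e \<le> f" and "f < lam k" and "lam k \<le> f - e + lam i"
  shows "single k (int p ^ f) \<in> K"
proof -
  define c where "c = int p ^ (f - e)"
  have "q k dvd c * q i"
    unfolding c_def power_add[symmetric] using \<open>lam k \<le> f - e + lam i\<close> by (rule le_imp_power_dvd)
  then have "shear k i c (single i (int p ^ e)) \<in> K"
    using Char_iso_closed[OF K shear_iso[OF i k \<open>k \<noteq> i\<close>] x] by blast
  moreover have "shear k i c (single i (int p ^ e)) = single i (int p ^ e) \<otimes> single k (int p ^ f)"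
  proof -
    have "c * int p ^ e = int p ^ f" using \<open>e \<le> f\<close> by (simp add: c_def flip: power_add)
    moreover have "int p ^ e < q i" "int p ^ f < q k"
      using pow_less_q assms(6-8) by simp_all
    ultimately show ?thesis
      using i k \<open>k \<noteq> i\<close> by (auto simp: shear_def single_def cycprod_mult fun_eq_iff)
  qed
  moreover have "single i (int p ^ e) \<in> carrier G" "single k (int p ^ f) \<in> carrier G"
    using subgroup.mem_carrier[OF Char_subgroup[OF K] x] single_in_carrier[OF k] pow_less_q[of f k]
      \<open>f < lam k\<close> by simp_all
  ultimately have "inv single i (int p ^ e) \<otimes> (single i (int p ^ e) \<otimes> single k (int p ^ f)) \<in> K"
    using Char_subgroup[OF K] x by (metis subgroup.m_closed subgroup.m_inv_closed)
  then show ?thesis using \<open>single i _ \<in> carrier G\<close> \<open>single k _ \<in> carrier G\<close>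
    by (simp add: m_assoc[symmetric])
qed

end

section \<open>The subgroups J(i,j)\<close>

locale odd_strict_cyclic_product = cyclic_product +
  assumes odd_p: "odd p"
    and lam_strict_mono: "\<And>i k. i \<in> {1..n} \<Longrightarrow> k \<in> {1..n} \<Longrightarrow> i < k \<Longrightarrow> lam i < lam k"
begin

text \<open>The left-hand side is \<lambda>_k - a_k for the tuple a of Jset_def; here the monotonicity of \<lambda> enters.\<close>

lemma Jset_exponent:
  assumes i: "i \<in> {1..n}" and k: "k \<in> {1..n}" and j: "j \<le> lam i"
  shows "lam k - (if k \<ge> i then j else nat (max 0 (int j - (int (lam i) - int (lam k)))))
         = max (lam k - j) (min (lam i - j) (lam k))"
proof (cases "i \<le> k")
  case True
  then have "lam i \<le> lam k" using lam_strict_mono[OF i k] by (cases "i = k") auto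
  then show ?thesis using True by (simp add: max_def min_def; arith)
next
  case False
  then have "lam k < lam i" using lam_strict_mono[OF k i] by simp
  then show ?thesis using False j by (simp add: max_def min_def nat_diff_distrib'; arith)
qed

lemma Jset_eq:
  assumes "i \<in> {1..n}" and "j \<le> lam i"
  shows "Jset p n lam i j = pow_kernel G (p ^ j) \<inter> pow_image G (p ^ (lam i - j))"
  using Jset_exponent[OF assms(1) _ assms(2)]
  by (auto simp: Jset_def Rset_iff pow_kernel_iff pow_image_iff power_dvd_max_iff[symmetric])

lemma Jset_Char: "i \<in> {1..n} \<Longrightarrow> j \<le> lam i \<Longrightarrow> Jset p n lam i j \<in> Char G"
  by (simp add: Jset_eq Int_Char pow_kernel_Char pow_image_Char)

lemma Jset_iff:
  assumes "i \<in> {1..n}" and "j \<le> lam i"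
  shows "g \<in> Jset p n lam i j \<longleftrightarrow> g \<in> carrier G \<and>
           (\<forall>k\<in>{1..n}. int p ^ (lam k - j) dvd g k \<and> int p ^ min (lam i - j) (lam k) dvd g k)"
  using assms by (auto simp: Jset_eq pow_kernel_iff pow_image_iff)

lemma Jset_subset_Char:
  assumes K: "K \<in> Char G" and g: "g \<in> K" and i: "i \<in> {1..n}" and j: "1 \<le> j" "j \<le> lam i"
    and not_dvd: "\<not> int p ^ Suc (lam i - j) dvd g i"
  shows "Jset p n lam i j \<subseteq> K"
proof
  have x: "single i (int p ^ (lam i - j)) \<in> K"
    using single_prime_power_mem_Char[OF K i single_coord_mem_Char[OF odd_p K g i]] j not_dvd by simp
  fix h assume h: "h \<in> Jset p n lam i j"
  then have hc: "h \<in> carrier G" using Jset_iff[OF i j(2)] by blast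
  show "h \<in> K"
  proof (rule mem_Char_if_singles[OF K hc])
    fix k assume k: "k \<in> {1..n}"
    define e where "e = max (lam k - j) (min (lam i - j) (lam k))"
    have hk: "0 \<le> h k" "h k < q k" using hc k by (auto simp: cycprod_carrier)
    have "int p ^ e dvd h k"
      using h k Jset_iff[OF i j(2)] power_dvd_max_iff unfolding e_def by blast
    show "single k (h k) \<in> K"
    proof (cases "e < lam k")
      case False
      then have "h k = 0"
        using eq_0_if_q_dvd[OF hk] \<open>int p ^ e dvd h k\<close> le_imp_power_dvd by (meson dvd_trans not_less)
      then show ?thesis using subgroup.one_closed[OF Char_subgroup[OF K]] single_0 by simp
    next
      case True
      then have e_max: "e = max (lam k - j) (lam i - j)" unfolding e_def by linarith
      have "single k (int p ^ e) \<in> K"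
      proof (cases "k = i")
        case True
        then show ?thesis using x e_max j by simp
      next
        case False
        show ?thesis
          by (rule single_shift_mem_Char[OF K x i k False]) (use True e_max j in auto)
      qed
      then show ?thesis using single_dvd_mem_Char[OF K k] \<open>int p ^ e dvd h k\<close> hk by blast
    qed
  qed
qed

lemma Jset_join_irreducible:
  assumes i: "i \<in> {1..n}" and j: "1 \<le> j" "j \<le> lam i"
  shows "join_irreducible_Char G (Jset p n lam i j)"
proof (rule join_irreducible_CharI[OF Jset_Char[OF i j(2)]])
  let ?x = "single i (int p ^ (lam i - j))"
  have x_i: "?x i = int p ^ (lam i - j)" by (simp add: single_def)
  show "?x \<in> Jset p n lam i j"
    using single_in_carrier[OF i] pow_less_q[of "lam i - j" i] j
    by (auto simp: Jset_iff[OF i j(2)] single_def)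
  show "?x \<noteq> \<one>" using x_i p_gt_1 by (auto simp: cycprod_one)
  fix a b assume a: "a \<in> carrier G" and b: "b \<in> carrier G" and x: "?x = a \<otimes> b"
  let ?d = "int p ^ Suc (lam i - j)"
  have "\<not> (?d dvd a i \<and> ?d dvd b i)"
  proof
    assume "?d dvd a i \<and> ?d dvd b i"
    moreover have "?d dvd q i" using j by (intro le_imp_power_dvd) simp
    ultimately have "?d dvd (a i + b i) mod q i" by (simp add: dvd_mod)
    then have "?d dvd int p ^ (lam i - j)" using x x_i i by (simp add: cycprod_mult)
    then have "?d \<le> int p ^ (lam i - j)" using p_gt_1 by (intro zdvd_imp_le) simp_all
    moreover have "int p ^ (lam i - j) < ?d" using p_gt_1 by (intro power_strict_increasing) simp_all
    ultimately show False by simp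
  qed
  then show "(\<forall>K\<in>Char G. a \<in> K \<longrightarrow> Jset p n lam i j \<subseteq> K) \<or> (\<forall>K\<in>Char G. b \<in> K \<longrightarrow> Jset p n lam i j \<subseteq> K)"
    using Jset_subset_Char[OF _ _ i j] by blast
qed

lemma Char_subset_if_Jsets_subset:
  assumes H: "H \<in> Char G" and K: "K \<in> Char G"
    and Jsets: "\<And>i j. i \<in> {1..n} \<Longrightarrow> j \<in> {1..lam i} \<Longrightarrow> Jset p n lam i j \<subseteq> H \<Longrightarrow>
                 Jset p n lam i j \<subseteq> K"
  shows "H \<subseteq> K"
proof
  fix g assume g: "g \<in> H"
  then have gc: "g \<in> carrier G" using subgroup.mem_carrier[OF Char_subgroup[OF H]] by blast
  show "g \<in> K"
  proof (rule mem_Char_if_singles[OF K gc])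
    fix k assume k: "k \<in> {1..n}"
    have gk: "0 \<le> g k" "g k < q k" using gc k by (auto simp: cycprod_carrier)
    show "single k (g k) \<in> K"
    proof (cases "g k = 0")
      case True
      then show ?thesis using subgroup.one_closed[OF Char_subgroup[OF K]] single_0 by simp
    next
      case False
      then obtain s where s: "s < lam k" "int p ^ s dvd g k" "\<not> int p ^ Suc s dvd g k"
        using prime_power_exact_dvd[OF prime_p, of "g k" "lam k"] gk by force
      define j where "j = lam k - s"
      have j: "1 \<le> j" "j \<le> lam k" "lam k - j = s" using s(1) unfolding j_def by auto
      have "single k (g k) \<in> H" by (rule single_coord_mem_Char[OF odd_p H g k])
      then have "Jset p n lam k j \<subseteq> H"
        by (rule Jset_subset_Char[OF H _ k j(1,2)]) (use s(3) j(3) in \<open>simp add: single_def\<close>)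
      then have "Jset p n lam k j \<subseteq> K" using Jsets k j by simp
      moreover have "single k (g k) \<in> Jset p n lam k j"
        using single_in_carrier[OF k gk] s(2) j by (auto simp: Jset_iff[OF k j(2)] single_def)
      ultimately show ?thesis by blast
    qed
  qed
qed

lemma join_irreducible_is_Jset:
  assumes H: "join_irreducible_Char G H"
  obtains i j where "i \<in> {1..n}" "j \<in> {1..lam i}" "H = Jset p n lam i j"
proof -
  have HC: "H \<in> Char G" using H by (simp add: join_irreducible_Char_def)
  define S where "S = {Jset p n lam i j | i j. i \<in> {1..n} \<and> j \<in> {1..lam i} \<and> Jset p n lam i j \<subseteq> H}"
  have "S \<subseteq> (\<lambda>(i, j). Jset p n lam i j) ` (SIGMA i:{1..n}. {1..lam i})"
    unfolding S_def by auto
  then have "finite S" by (rule finite_subset) auto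
  moreover have "S \<subseteq> Char G" unfolding S_def using Jset_Char by auto
  moreover have "\<forall>A\<in>S. A \<subseteq> H" unfolding S_def by blast
  moreover have "H \<subseteq> K" if "K \<in> Char G" and "\<forall>A\<in>S. A \<subseteq> K" for K
  proof (rule Char_subset_if_Jsets_subset[OF HC \<open>K \<in> Char G\<close>])
    fix i j assume "i \<in> {1..n}" "j \<in> {1..lam i}" "Jset p n lam i j \<subseteq> H"
    then have "Jset p n lam i j \<in> S"
      unfolding S_def by (intro CollectI exI[where x = i] exI[where x = j]) simp
    then show "Jset p n lam i j \<subseteq> K" using \<open>\<forall>A\<in>S. A \<subseteq> K\<close> by blast
  qed
  ultimately have "H \<in> S" by (intro join_irreducible_Char_mem_family[OF H]) auto
  then show ?thesis using that unfolding S_def by blast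
qed

theorem join_irreducible_Char_eq_Jsets:
  "{H. join_irreducible_Char G H} = {Jset p n lam i j | i j. i \<in> {1..n} \<and> j \<in> {1..lam i}}"
proof
  show "{H. join_irreducible_Char G H} \<subseteq> {Jset p n lam i j | i j. i \<in> {1..n} \<and> j \<in> {1..lam i}}"
    using join_irreducible_is_Jset by blast
  show "{Jset p n lam i j | i j. i \<in> {1..n} \<and> j \<in> {1..lam i}} \<subseteq> {H. join_irreducible_Char G H}"
    using Jset_join_irreducible by auto
qed

end

theorem mainTheorem16:
  fixes p n :: nat and lam :: "nat \<Rightarrow> nat"
  assumes "Factorial_Ring.prime p" and "p \<noteq> 2"
    and "0 < lam 1"
    and "\<And>i k. i \<in> {1..n} \<Longrightarrow> k \<in> {1..n} \<Longrightarrow> i < k \<Longrightarrow> lam i < lam k"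
  shows "{H. join_irreducible_Char (cycprod p n lam) H} =
         {Jset p n lam i j | i j. i \<in> {1..n} \<and> j \<in> {1..lam i}}"
proof -
  have "odd p" using prime_odd_nat[OF assms(1)] prime_gt_1_nat[OF assms(1)] assms(2) by simp
  with assms(1,4) interpret odd_strict_cyclic_product p n lam "cycprod p n lam"
    by unfold_locales simp_all
  show ?thesis by (rule join_irreducible_Char_eq_Jsets)
qed

end
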